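(* Let $T=(p,q:F\to E)$ be an LR textile system whose associated 2-graph $\Lambda=\Lambda_T$ is row-finite and essential. Let $\mathcal G=\{\mathcal G^i_z: z\in\Lambda^0,\ 1\le i\le m(z)\}$ be a 2-graph insplitting partition of $\Lambda$, let $\Lambda_I$ be the resulting insplit 2-graph, and let $T_I=T_{\Lambda_I}$ be its associated textile system. Then there are textile systems $T_A,T_B,T_C,T_D$ such that $T_A$ is a textile (Johnson--Madden) insplit of $T$, $T_B=\widehat{T_A}$, $T_C$ is a textile insplit of $T_B$, and $T_D=\widehat{T_C}$, and such that, after a bijective relabeling of alphabets, the shift spaces $\mathsf X^+_{T_D}$ and $\mathsf X^+_{T_I}$ coincide (i.e. $T_D$ and $T_I$ give rise to identical tilings of $\mathbb R_{\ge 0}^2$). In particular $\mathsf X^+_{T}$ and $\mathsf X^+_{T_I}$ are conjugate, so 2-graph insplitting induces a conjugacy of the associated one-sided 2-dimensional shifts of finite type.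
   Context: $\mathbb N=\{0,1,2,\dots\}$; $\varepsilon_1,\varepsilon_2$ are the standard generators of $\mathbb N^2$. A directed graph $E=(E^0,E^1,r,s)$ has vertices $E^0$, edges $E^1$, range and source maps $r,s:E^1\to E^0$; for $v\in E^0$, $vE^1=r^{-1}(v)$. A graph homomorphism $p:F\to E$ is a pair of maps $F^0\to E^0$, $F^1\to E^1$ (both written $p$) with $r(p(f))=p(r(f))$, $s(p(f))=p(s(f))$. A textile system $T=(p,q:F\to E)$ consists of directed graphs $F,E$ and graph homomorphisms $p,q:F\to E$ such that $f\mapsto(r(f),p(f),s(f),q(f))$ is injective on $F^1$. $p$ has unique $r$-path lifting if for all $v\in F^0$, $e\in E^1$ with $p(v)=r(e)$ there is exactly one $f\in F^1$ with $r(f)=v$, $p(f)=e$; unique $s$-path lifting is defined analogously with $s$. $T$ is LR if $p$ has unique $r$-path lifting and $q$ has unique $s$-path lifting. Shift space: $\mathsf X^+_T=\{x:\mathbb N^2\to F^1 : s(x_n)=r(x_{n+\varepsilon_1}),\ p(x_n)=q(x_{n+\varepsilon_2})\ \forall n\in\mathbb N^2\}$ with the product topology ($F^1$ discrete) and shift action $(\sigma^m x)_n=x_{n+m}$, $m\in\mathbb N^2$. Two such spaces are conjugate if there is a homeomorphism $h$ between them with $h\circ\sigma^m=\sigma^m\circ h$ for all $m\in\mathbb N^2$. Directed-graph insplitting: given, for each $v\in F^0$, a partition of $vF^1$ into nonempty sets $\mathcal F_v^1,\dots,\mathcal F_v^{m(v)}$, the insplit graph $F_I$ has $F_I^0=\{v^i: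 v\in F^0, 1\le i\le m(v)\}$, $F_I^1=\{f^j: f\in F^1, 1\le j\le m(s(f))\}$, $s(f^j)=s(f)^j$, and $r(f^j)=r(f)^k$ where $f\in\mathcal F^k_{r(f)}$. Textile (Johnson--Madden) insplit of $T$: $T_I=(p_I,q_I:F_I\to E)$ with $p_I(v^i)=p(v)$, $p_I(f^j)=p(f)$, and likewise for $q_I$. Inverted textile system: for $T=(p,q:F\to E)$, $\widehat T=(\hat p,\hat q:\widehat F\to\widehat E)$ where $\widehat E$ has vertices $E^0$, edges $F^0$, range $q|_{F^0}$ and source $p|_{F^0}$; $\widehat F$ has vertices $E^1$, edges $F^1$, range $q|_{F^1}$, source $p|_{F^1}$; $\hat p=(s_E,s_F)$, $\hat q=(r_E,r_F)$. 2-graphs: a 2-graph is a countable category $\Lambda$ with a functor $d:\Lambda\to\mathbb N^2$ such that whenever $d(\lambda)=m+n$ there are unique $\mu,\nu$ with $d(\mu)=m,d(\nu)=n,\lambda=\mu\nu$ (composition $\mu\nu$ defined when $s(\mu)=r(\nu)$). $\Lambda^m=d^{-1}(m)$, $\Lambda^0$ = vertices, $\Lambda^1=\Lambda^{\varepsilon_1}\sqcup\Lambda^{\varepsilon_2}$ (edges of color 1 and 2); $\lambda(m,n)$ denotes the unique factor of degree $n-m$ in position $[m,n]$. Row-finite: $v\Lambda^m$ finite; essential: $v\Lambda^m$ and $\Lambda^m v$ nonempty for all $v,m$. Any 2-graph is the quotient of the path category of its 1-skeleton (2-colored graph $(\Lambda^0,\Lambda^1,r,s)$) by the relation identifying $fg\sim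 g'f'$ when they are the same element of $\Lambda^{\varepsilon_1+\varepsilon_2}$ (commuting squares). The 2-graph $\Lambda_T$ of a textile system: 2-colored graph with vertices $E^0$, color-1 edges $E^1$ (with $r,s$ from $E$) and color-2 edges $F^0$ with $r(w)=q(w)$, $s(w)=p(w)$; commuting squares $ve\sim e'w$ iff there is $f\in F^1$ with $r(f)=v,s(f)=w,p(f)=e,q(f)=e'$; $\Lambda_T$ is the quotient of the path category by the equivalence generated by these squares (compatible with concatenation). For LR $T$ this is a 2-graph, with $\Lambda_T^{\varepsilon_1+\varepsilon_2}$ identified with $F^1$. Conversely, the textile system of a 2-graph $\Lambda$ is $T_\Lambda=(p,q:F_\Lambda\to E_\Lambda)$ with $E_\Lambda=(\Lambda^0,\Lambda^{\varepsilon_1},r,s)$, $F_\Lambda=(\Lambda^{\varepsilon_2},\Lambda^{\varepsilon_1+\varepsilon_2},\lambda\mapsto\lambda(0,\varepsilon_2),\lambda\mapsto\lambda(\varepsilon_1,\varepsilon_1+\varepsilon_2))$, $p(\lambda)=\lambda(\varepsilon_2,\varepsilon_1+\varepsilon_2)$, $q(\lambda)=\lambda(0,\varepsilon_1)$, and on $F_\Lambda^0=\Lambda^{\varepsilon_2}$, $p=s$, $q=r$. 2-graph insplitting: an insplitting partition of $\Lambda$ is, for each $z\in\Lambda^0$, a partition of $z\Lambda^1$ (edges of either color with range $z$) into nonempty sets $\mathcal G^1_z,\dots,\mathcal G^{m(z)}_z$ satisfying the pairing condition: for every $\lambda\in\Lambda^{\varepsilon_1+\varepsilon_2}$, $\lambda(0,\varepsilon_1)$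 and $\lambda(0,\varepsilon_2)$ lie in the same set $\mathcal G^j_{r(\lambda)}$. The insplit 2-graph $\Lambda_I$ is the quotient of the path category of the 2-colored graph with vertices $\{z^i:1\le i\le m(z)\}$, edges $\{f^i: f\in\Lambda^1, 1\le i\le m(s(f))\}$, $d(f^i)=d(f)$, $s(f^i)=s(f)^i$, $r(f^i)=r(f)^j$ where $f\in\mathcal G^j_{r(f)}$, by the commuting squares $f^ig^k\sim_I a^jb^k$ iff $g\in\mathcal G^i_{s(f)}$, $b\in\mathcal G^j_{s(a)}$ and $fg\sim ab$ in $\Lambda$. *)

theory Defs
  imports "HOL-Analysis.Analysis"
begin

record ('v,'e) dgraph =
  verts :: "'v set"
  edges :: "'e set"
  rng   :: "'e \<Rightarrow> 'v"
  src   :: "'e \<Rightarrow> 'v"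

definition dgraph_wf :: "('v,'e) dgraph \<Rightarrow> bool" where
  "dgraph_wf G \<longleftrightarrow> (\<forall>f\<in>edges G. rng G f \<in> verts G \<and> src G f \<in> verts G)"

text \<open>A textile system T = (p,q : F \<rightarrow> E). Type parameters:
  'a = E^0, 'b = E^1, 'c = F^0, 'd = F^1.\<close>
record ('a,'b,'c,'d) textile =
  tE  :: "('a,'b) dgraph"
  tF  :: "('c,'d) dgraph"
  pV  :: "'c \<Rightarrow> 'a"
  pE  :: "'d \<Rightarrow> 'b"
  qV  :: "'c \<Rightarrow> 'a"
  qE  :: "'d \<Rightarrow> 'b"

definition graph_hom ::
  "('c,'d) dgraph \<Rightarrow> ('a,'b) dgraph \<Rightarrow> ('c \<Rightarrow> 'a) \<Rightarrow> ('d \<Rightarrow> 'b) \<Rightarrow> bool" where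
  "graph_hom F E hV hE \<longleftrightarrow>
     (\<forall>v\<in>verts F. hV v \<in> verts E) \<and>
     (\<forall>f\<in>edges F. hE f \<in> edges E \<and> rng E (hE f) = hV (rng F f) \<and> src E (hE f) = hV (src F f))"

definition textile_system :: "('a,'b,'c,'d) textile \<Rightarrow> bool" where
  "textile_system T \<longleftrightarrow>
     dgraph_wf (tE T) \<and> dgraph_wf (tF T) \<and>
     graph_hom (tF T) (tE T) (pV T) (pE T) \<and>
     graph_hom (tF T) (tE T) (qV T) (qE T) \<and>
     inj_on (\<lambda>f. (rng (tF T) f, pE T f, src (tF T) f, qE T f)) (edges (tF T))"

text \<open>p has unique r-path lifting, q has unique s-path lifting.\<close>
definition LR :: "('a,'b,'c,'d) textile \<Rightarrow> bool" where
  "LR T \<longleftrightarrow>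
     (\<forall>v\<in>verts (tF T). \<forall>e\<in>edges (tE T). pV T v = rng (tE T) e \<longrightarrow>
        (\<exists>!f. f \<in> edges (tF T) \<and> rng (tF T) f = v \<and> pE T f = e)) \<and>
     (\<forall>v\<in>verts (tF T). \<forall>e\<in>edges (tE T). qV T v = src (tE T) e \<longrightarrow>
        (\<exists>!f. f \<in> edges (tF T) \<and> src (tF T) f = v \<and> qE T f = e))"

definition shift_space :: "('a,'b,'c,'d) textile \<Rightarrow> (nat \<times> nat \<Rightarrow> 'd) set" where
  "shift_space T = {x. \<forall>i j.
      x (i,j) \<in> edges (tF T) \<and>
      src (tF T) (x (i,j)) = rng (tF T) (x (Suc i, j)) \<and>
      pE T (x (i,j)) = qE T (x (i, Suc j))}"

definition shift :: "nat \<times> nat \<Rightarrow> (nat \<times> nat \<Rightarrow> 'd) \<Rightarrow> (nat \<times> nat \<Rightarrow> 'd)" where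
  "shift m x = (\<lambda>n. x (fst n + fst m, snd n + snd m))"

definition shift_topology :: "('a,'b,'c,'d) textile \<Rightarrow> (nat \<times> nat \<Rightarrow> 'd) topology" where
  "shift_topology T =
     subtopology (product_topology (\<lambda>_. discrete_topology (edges (tF T))) UNIV) (shift_space T)"

definition conjugate_shifts :: "('a,'b,'c,'d) textile \<Rightarrow> ('a2,'b2,'c2,'d2) textile \<Rightarrow> bool" where
  "conjugate_shifts T1 T2 \<longleftrightarrow>
     (\<exists>h. homeomorphic_map (shift_topology T1) (shift_topology T2) h \<and>
          (\<forall>m. \<forall>x\<in>shift_space T1. h (shift m x) = shift m (h x)))"

definition dg_insplit_partition ::
  "('v,'e) dgraph \<Rightarrow> ('v \<Rightarrow> nat) \<Rightarrow> ('v \<Rightarrow> nat \<Rightarrow> 'e set) \<Rightarrow> bool" where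
  "dg_insplit_partition F m P \<longleftrightarrow>
     (\<forall>v\<in>verts F.
        (\<forall>k\<in>{1..m v}. P v k \<noteq> {}) \<and>
        (\<forall>k\<in>{1..m v}. \<forall>l\<in>{1..m v}. k \<noteq> l \<longrightarrow> P v k \<inter> P v l = {}) \<and>
        (\<Union>k\<in>{1..m v}. P v k) = {f \<in> edges F. rng F f = v})"

definition dg_idx :: "('v \<Rightarrow> nat) \<Rightarrow> ('v \<Rightarrow> nat \<Rightarrow> 'e set) \<Rightarrow> 'v \<Rightarrow> 'e \<Rightarrow> nat" where
  "dg_idx m P v f = (THE k. k \<in> {1..m v} \<and> f \<in> P v k)"

definition dg_insplit ::
  "('v,'e) dgraph \<Rightarrow> ('v \<Rightarrow> nat) \<Rightarrow> ('v \<Rightarrow> nat \<Rightarrow> 'e set) \<Rightarrow> ('v \<times> nat, 'e \<times> nat) dgraph" where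
  "dg_insplit F m P =
     \<lparr> verts = {(v,i). v \<in> verts F \<and> i \<in> {1..m v}},
       edges = {(f,j). f \<in> edges F \<and> j \<in> {1..m (src F f)}},
       rng = (\<lambda>(f,j). (rng F f, dg_idx m P (rng F f) f)),
       src = (\<lambda>(f,j). (src F f, j)) \<rparr>"

definition textile_insplit ::
  "('a,'b,'c,'d) textile \<Rightarrow> ('c \<Rightarrow> nat) \<Rightarrow> ('c \<Rightarrow> nat \<Rightarrow> 'd set) \<Rightarrow> ('a,'b,'c \<times> nat,'d \<times> nat) textile" where
  "textile_insplit T m P =
     \<lparr> tE = tE T, tF = dg_insplit (tF T) m P,
       pV = (\<lambda>(v,i). pV T v), pE = (\<lambda>(f,j). pE T f),
       qV = (\<lambda>(v,i). qV T v), qE = (\<lambda>(f,j). qE T f) \<rparr>"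

definition textile_invert :: "('a,'b,'c,'d) textile \<Rightarrow> ('a,'c,'b,'d) textile" where
  "textile_invert T =
     \<lparr> tE = \<lparr> verts = verts (tE T), edges = verts (tF T), rng = qV T, src = pV T \<rparr>,
       tF = \<lparr> verts = edges (tE T), edges = edges (tF T), rng = qE T, src = pE T \<rparr>,
       pV = src (tE T), pE = src (tF T),
       qV = rng (tE T), qE = rng (tF T) \<rparr>"

text \<open>A square (a,b,g,f) records the identification
  a b ~ g f of the colour-(1,2) path a b (a colour 1, b colour 2) with the
  colour-(2,1) path g f (g colour 2, f colour 1). For a 2-graph, squares correspond
  bijectively to the elements of degree e1+e2 (via their two factorisations).\<close>
record ('a,'b,'c) sq2graph =
  V0  :: "'a set"
  C1  :: "'b set"
  C2  :: "'c set"
  r1  :: "'b \<Rightarrow> 'a"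
  s1  :: "'b \<Rightarrow> 'a"
  r2  :: "'c \<Rightarrow> 'a"
  s2  :: "'c \<Rightarrow> 'a"
  Sq  :: "('b \<times> 'c \<times> 'c \<times> 'b) set"

definition edges1 :: "('a,'b,'c) sq2graph \<Rightarrow> ('b + 'c) set" where
  "edges1 L = Inl ` C1 L \<union> Inr ` C2 L"

fun er :: "('a,'b,'c) sq2graph \<Rightarrow> ('b + 'c) \<Rightarrow> 'a" where
  "er L (Inl e) = r1 L e" | "er L (Inr g) = r2 L g"

fun es :: "('a,'b,'c) sq2graph \<Rightarrow> ('b + 'c) \<Rightarrow> 'a" where
  "es L (Inl e) = s1 L e" | "es L (Inr g) = s2 L g"

text \<open>Normal form of an element of degree (a,b): by the factorisation property each
  element of degree (a,b) is uniquely a composable path of a colour-1 edges followed by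
  b colour-2 edges (composition \<lambda>\<mu> defined when s(\<lambda>) = r(\<mu>)).\<close>
definition nf_path :: "('a,'b,'c) sq2graph \<Rightarrow> nat \<Rightarrow> nat \<Rightarrow> ('b + 'c) list \<Rightarrow> bool" where
  "nf_path L a b p \<longleftrightarrow>
     length p = a + b \<and> set p \<subseteq> edges1 L \<and>
     (\<forall>i < length p. (i < a \<longleftrightarrow> isl (p ! i))) \<and>
     (\<forall>i. Suc i < length p \<longrightarrow> es L (p ! i) = er L (p ! Suc i))"

text \<open>v \<Lambda>^(a,b) and \<Lambda>^(a,b) v (for (a,b) = (0,0) this is {v}, represented by [] ).\<close>
definition range_paths :: "('a,'b,'c) sq2graph \<Rightarrow> 'a \<Rightarrow> nat \<Rightarrow> nat \<Rightarrow> ('b + 'c) list set" where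
  "range_paths L v a b = {p. nf_path L a b p \<and> (p \<noteq> [] \<longrightarrow> er L (hd p) = v)}"

definition source_paths :: "('a,'b,'c) sq2graph \<Rightarrow> 'a \<Rightarrow> nat \<Rightarrow> nat \<Rightarrow> ('b + 'c) list set" where
  "source_paths L v a b = {p. nf_path L a b p \<and> (p \<noteq> [] \<longrightarrow> es L (last p) = v)}"

definition row_finite :: "('a,'b,'c) sq2graph \<Rightarrow> bool" where
  "row_finite L \<longleftrightarrow> (\<forall>v\<in>V0 L. \<forall>a b. finite (range_paths L v a b))"

definition essential :: "('a,'b,'c) sq2graph \<Rightarrow> bool" where
  "essential L \<longleftrightarrow>
     (\<forall>v\<in>V0 L. \<forall>a b. range_paths L v a b \<noteq> {} \<and> source_paths L v a b \<noteq> {})"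

definition twograph_of_textile :: "('a,'b,'c,'d) textile \<Rightarrow> ('a,'b,'c) sq2graph" where
  "twograph_of_textile T =
     \<lparr> V0 = verts (tE T), C1 = edges (tE T), C2 = verts (tF T),
       r1 = rng (tE T), s1 = src (tE T), r2 = qV T, s2 = pV T,
       Sq = (\<lambda>f. (qE T f, src (tF T) f, rng (tF T) f, pE T f)) ` edges (tF T) \<rparr>"

text \<open>The textile system T_\<Lambda> of a 2-graph, with \<Lambda>^(e1+e2) identified with the squares:
  for \<lambda> = (a,b,g,f) we have \<lambda>(0,e1) = a, \<lambda>(e1,e1+e2) = b, \<lambda>(0,e2) = g, \<lambda>(e2,e1+e2) = f.\<close>
definition textile_of_twograph ::
  "('a,'b,'c) sq2graph \<Rightarrow> ('a,'b,'c,'b \<times> 'c \<times> 'c \<times> 'b) textile" where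
  "textile_of_twograph L =
     \<lparr> tE = \<lparr> verts = V0 L, edges = C1 L, rng = r1 L, src = s1 L \<rparr>,
       tF = \<lparr> verts = C2 L, edges = Sq L,
              rng = (\<lambda>(a,b,g,f). g), src = (\<lambda>(a,b,g,f). b) \<rparr>,
       pV = s2 L, pE = (\<lambda>(a,b,g,f). f),
       qV = r2 L, qE = (\<lambda>(a,b,g,f). a) \<rparr>"

definition tg_insplit_partition ::
  "('a,'b,'c) sq2graph \<Rightarrow> ('a \<Rightarrow> nat) \<Rightarrow> ('a \<Rightarrow> nat \<Rightarrow> ('b + 'c) set) \<Rightarrow> bool" where
  "tg_insplit_partition L m G \<longleftrightarrow>
     (\<forall>z\<in>V0 L.
        (\<forall>j\<in>{1..m z}. G z j \<noteq> {}) \<and>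
        (\<forall>i\<in>{1..m z}. \<forall>j\<in>{1..m z}. i \<noteq> j \<longrightarrow> G z i \<inter> G z j = {}) \<and>
        (\<Union>j\<in>{1..m z}. G z j) = {x \<in> edges1 L. er L x = z}) \<and>
     (\<forall>(a,b,g,f)\<in>Sq L. \<exists>j\<in>{1..m (r1 L a)}. Inl a \<in> G (r1 L a) j \<and> Inr g \<in> G (r1 L a) j)"

definition tg_idx :: "('a,'b,'c) sq2graph \<Rightarrow> ('a \<Rightarrow> nat) \<Rightarrow> ('a \<Rightarrow> nat \<Rightarrow> ('b + 'c) set) \<Rightarrow> ('b + 'c) \<Rightarrow> nat" where
  "tg_idx L m G x = (THE j. j \<in> {1..m (er L x)} \<and> x \<in> G (er L x) j)"

definition tg_insplit ::
  "('a,'b,'c) sq2graph \<Rightarrow> ('a \<Rightarrow> nat) \<Rightarrow> ('a \<Rightarrow> nat \<Rightarrow> ('b + 'c) set)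
     \<Rightarrow> ('a \<times> nat, 'b \<times> nat, 'c \<times> nat) sq2graph" where
  "tg_insplit L m G =
     \<lparr> V0 = {(z,i). z \<in> V0 L \<and> i \<in> {1..m z}},
       C1 = {(e,i). e \<in> C1 L \<and> i \<in> {1..m (s1 L e)}},
       C2 = {(g,i). g \<in> C2 L \<and> i \<in> {1..m (s2 L g)}},
       r1 = (\<lambda>(e,i). (r1 L e, tg_idx L m G (Inl e))),
       s1 = (\<lambda>(e,i). (s1 L e, i)),
       r2 = (\<lambda>(g,i). (r2 L g, tg_idx L m G (Inr g))),
       s2 = (\<lambda>(g,i). (s2 L g, i)),
       Sq = {((a,i),(b,k),(g,j),(f,k)) | a b g f i j k.
               (a,b,g,f) \<in> Sq L \<and>
               i \<in> {1..m (s1 L a)} \<and> k \<in> {1..m (s2 L b)} \<and>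
               j \<in> {1..m (s2 L g)} \<and> k \<in> {1..m (s1 L f)} \<and>
               Inr b \<in> G (s1 L a) i \<and> Inl f \<in> G (s2 L g) j} \<rparr>"

end

theory Submission
  imports Defs
begin

(* A square of the insplit 2-graph over a tile f of T is determined by f and the split index k
   of its source s(f): the indices of its other edges are forced by the partition. In a tiling
   the index k must match the range index of the tile to the right, which is the class of p of
   that tile. So forgetting indices is a 2-block conjugacy from the tilings of T_I onto those
   of T, and the pairing condition of the partition makes the vertical matching automatic.
   The textile insplit of T that splits vF^1 according to the class of p(f) carries exactly
   the same index data; inverting twice restores the orientation, so a trivial second
   insplit already gives T_D with the tilings of T_I up to relabelling. *)

definition block_code :: "('d \<Rightarrow> 'd \<Rightarrow> 'e) \<Rightarrow> (nat \<times> nat \<Rightarrow> 'd) \<Rightarrow> nat \<times> nat \<Rightarrow> 'e" where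
  "block_code H x = (\<lambda>(i,j). H (x (i,j)) (x (Suc i, j)))"

lemma block_code_shift: "block_code H (shift m x) = shift m (block_code H x)"
  by (auto simp: block_code_def shift_def)

lemma topspace_shift_topology [simp]: "topspace (shift_topology T) = shift_space T"
  unfolding shift_topology_def shift_space_def by (auto simp: PiE_def)

lemma shift_space_edges: "x \<in> shift_space T \<Longrightarrow> x n \<in> edges (tF T)"
  unfolding shift_space_def by (cases n) blast

lemma continuous_map_discrete_pair:
  assumes "continuous_map X (discrete_topology A) f"
    and "continuous_map X (discrete_topology B) g"
    and "\<And>x. x \<in> topspace X \<Longrightarrow> H (f x) (g x) \<in> C"
  shows "continuous_map X (discrete_topology C) (\<lambda>x. H (f x) (g x))"
proof -
  let ?S = "(\<lambda>x. (f x, g x)) ` topspace X"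
  have pair: "continuous_map X (discrete_topology (A \<times> B)) (\<lambda>x. (f x, g x))"
    using assms(1,2) by (simp add: prod_topology_discrete_topology continuous_map_pairwise o_def)
  then have "?S \<subseteq> A \<times> B"
    using continuous_map_image_subset_topspace[OF pair] by simp
  then have "discrete_topology ?S = subtopology (discrete_topology (A \<times> B)) ?S"
    by (simp add: Int_absorb1)
  then have into_S: "continuous_map X (discrete_topology ?S) (\<lambda>x. (f x, g x))"
    using continuous_map_into_subtopology[OF pair, of ?S] by simp
  have "continuous_map (discrete_topology ?S) (discrete_topology C) (case_prod H)"
    using assms(3) by auto
  from continuous_map_compose[OF into_S this] show ?thesis
    by (simp add: comp_def)
qed

lemma continuous_map_block_code:
  assumes "block_code H ` shift_space T1 \<subseteq> shift_space T2"
  shows "continuous_map (shift_topology T1) (shift_topology T2) (block_code H)"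
  unfolding shift_topology_def continuous_map_in_subtopology continuous_map_componentwise_UNIV
proof (intro conjI allI)
  fix n :: "nat \<times> nat"
  obtain i j where n: "n = (i,j)" by fastforce
  have "continuous_map (shift_topology T1) (discrete_topology (edges (tF T2)))
          (\<lambda>x. H (x (i,j)) (x (Suc i, j)))"
  proof (rule continuous_map_discrete_pair[where A = "edges (tF T1)" and B = "edges (tF T1)"])
    fix x assume "x \<in> topspace (shift_topology T1)"
    then have "block_code H x \<in> shift_space T2"
      using assms by auto
    then have "block_code H x (i,j) \<in> edges (tF T2)"
      by (rule shift_space_edges)
    then show "H (x (i,j)) (x (Suc i, j)) \<in> edges (tF T2)"
      by (simp add: block_code_def)
  qed (auto simp: shift_topology_def
         intro!: continuous_map_from_subtopology continuous_map_product_projection)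
  then show "continuous_map (subtopology (product_topology (\<lambda>_. discrete_topology (edges (tF T1))) UNIV)
          (shift_space T1)) (discrete_topology (edges (tF T2))) (\<lambda>x. block_code H x n)"
    by (simp add: n block_code_def shift_topology_def)
qed (use assms in \<open>auto simp: shift_topology_def\<close>)

lemma conjugate_shifts_block_code:
  assumes onto: "block_code H ` shift_space T1 = shift_space T2"
    and inverse: "\<And>x. x \<in> shift_space T1 \<Longrightarrow> block_code K (block_code H x) = x"
  shows "conjugate_shifts T1 T2"
  unfolding conjugate_shifts_def
proof (intro exI conjI ballI allI)
  have inverse': "block_code H (block_code K y) = y" if "y \<in> shift_space T2" for y
    using that onto inverse by force
  have into_T1: "block_code K ` shift_space T2 \<subseteq> shift_space T1"
    using onto inverse by force
  show "homeomorphic_map (shift_topology T1) (shift_topology T2) (block_code H)"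
    unfolding homeomorphic_map_maps homeomorphic_maps_def
  proof (intro exI conjI ballI)
    show "continuous_map (shift_topology T1) (shift_topology T2) (block_code H)"
      using onto by (intro continuous_map_block_code) simp
    show "continuous_map (shift_topology T2) (shift_topology T1) (block_code K)"
      using into_T1 by (rule continuous_map_block_code)
  qed (simp_all add: inverse inverse')
qed (rule block_code_shift)

lemma textile_invert_simps:
  "tE (textile_invert T) = \<lparr>verts = verts (tE T), edges = verts (tF T), rng = qV T, src = pV T\<rparr>"
  "tF (textile_invert T) = \<lparr>verts = edges (tE T), edges = edges (tF T), rng = qE T, src = pE T\<rparr>"
  "pV (textile_invert T) = src (tE T)" "pE (textile_invert T) = src (tF T)"
  "qV (textile_invert T) = rng (tE T)" "qE (textile_invert T) = rng (tF T)"
  by (simp_all add: textile_invert_def)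

lemma textile_insplit_simps:
  "tE (textile_insplit T m P) = tE T"
  "tF (textile_insplit T m P) = dg_insplit (tF T) m P"
  "pV (textile_insplit T m P) (v,i) = pV T v" "pE (textile_insplit T m P) (f,j) = pE T f"
  "qV (textile_insplit T m P) (v,i) = qV T v" "qE (textile_insplit T m P) (f,j) = qE T f"
  by (simp_all add: textile_insplit_def)

lemma dg_insplit_simps:
  "verts (dg_insplit F m P) = {(v,i). v \<in> verts F \<and> i \<in> {1..m v}}"
  "edges (dg_insplit F m P) = {(f,j). f \<in> edges F \<and> j \<in> {1..m (src F f)}}"
  "rng (dg_insplit F m P) (f,j) = (rng F f, dg_idx m P (rng F f) f)"
  "src (dg_insplit F m P) (f,j) = (src F f, j)"
  by (simp_all add: dg_insplit_def)

lemma dg_idx_eq: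
  assumes "dg_insplit_partition F m P" "v \<in> verts F" "k \<in> {1..m v}" "f \<in> P v k"
  shows "dg_idx m P v f = k"
  unfolding dg_idx_def
  using assms unfolding dg_insplit_partition_def by (intro the_equality) blast+

lemma dg_insplit_partition_trivial:
  assumes "\<And>v. v \<in> verts F \<Longrightarrow> \<exists>f\<in>edges F. rng F f = v"
  shows "dg_insplit_partition F (\<lambda>_. 1) (\<lambda>v _. {f \<in> edges F. rng F f = v})"
  using assms unfolding dg_insplit_partition_def by auto

lemma tg_idx_mem:
  assumes "tg_insplit_partition L m G" "x \<in> edges1 L" "er L x \<in> V0 L"
  shows "tg_idx L m G x \<in> {1..m (er L x)} \<and> x \<in> G (er L x) (tg_idx L m G x)"
proof -
  have "(\<Union>j\<in>{1..m (er L x)}. G (er L x) j) = {y \<in> edges1 L. er L y = er L x}"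
    and disjoint: "\<forall>i\<in>{1..m (er L x)}. \<forall>j\<in>{1..m (er L x)}. i \<noteq> j \<longrightarrow> G (er L x) i \<inter> G (er L x) j = {}"
    using assms unfolding tg_insplit_partition_def by blast+
  then obtain j where "j \<in> {1..m (er L x)}" "x \<in> G (er L x) j"
    using assms(2) by blast
  moreover from this disjoint have "tg_idx L m G x = j"
    unfolding tg_idx_def by (intro the_equality) blast+
  ultimately show ?thesis by simp
qed

lemma tg_idx_eq:
  assumes "tg_insplit_partition L m G" "x \<in> edges1 L" "er L x \<in> V0 L"
    and "j \<in> {1..m (er L x)}" "x \<in> G (er L x) j"
  shows "tg_idx L m G x = j"
  using tg_idx_mem[OF assms(1-3)] assms unfolding tg_insplit_partition_def by blast

lemma tg_idx_square:
  assumes "tg_insplit_partition L m G" "(a,b,g,f) \<in> Sq L" "r2 L g = r1 L a"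
    and "Inl a \<in> edges1 L" "Inr g \<in> edges1 L" "r1 L a \<in> V0 L"
  shows "tg_idx L m G (Inl a) = tg_idx L m G (Inr g)"
proof -
  obtain j where "j \<in> {1..m (r1 L a)}" "Inl a \<in> G (r1 L a) j" "Inr g \<in> G (r1 L a) j"
    using assms(1,2) unfolding tg_insplit_partition_def by fastforce
  then show ?thesis
    using tg_idx_eq[OF assms(1,4)] tg_idx_eq[OF assms(1,5)] assms(3,6) by simp
qed

lemma range_paths_colour1_nonempty:
  "range_paths L v 1 0 \<noteq> {} \<longleftrightarrow> (\<exists>e\<in>C1 L. r1 L e = v)"
proof
  assume "range_paths L v 1 0 \<noteq> {}"
  then obtain p where p: "nf_path L 1 0 p" "p \<noteq> [] \<longrightarrow> er L (hd p) = v"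
    unfolding range_paths_def by blast
  then obtain x where "p = [x]" "isl x" "x \<in> edges1 L"
    unfolding nf_path_def by (auto simp: length_Suc_conv)
  then show "\<exists>e\<in>C1 L. r1 L e = v"
    using p(2) by (auto simp: edges1_def)
next
  assume "\<exists>e\<in>C1 L. r1 L e = v"
  then obtain e where "e \<in> C1 L" "r1 L e = v" by blast
  then have "[Inl e] \<in> range_paths L v 1 0"
    by (simp add: range_paths_def nf_path_def edges1_def)
  then show "range_paths L v 1 0 \<noteq> {}" by blast
qed

lemma range_paths_colour2_nonempty:
  "range_paths L v 0 1 \<noteq> {} \<longleftrightarrow> (\<exists>g\<in>C2 L. r2 L g = v)"
proof
  assume "range_paths L v 0 1 \<noteq> {}"
  then obtain p where p: "nf_path L 0 1 p" "p \<noteq> [] \<longrightarrow> er L (hd p) = v"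
    unfolding range_paths_def by blast
  then obtain x where "p = [x]" "\<not> isl x" "x \<in> edges1 L"
    unfolding nf_path_def by (auto simp: length_Suc_conv)
  then show "\<exists>g\<in>C2 L. r2 L g = v"
    using p(2) by (auto simp: edges1_def)
next
  assume "\<exists>g\<in>C2 L. r2 L g = v"
  then obtain g where "g \<in> C2 L" "r2 L g = v" by blast
  then have "[Inr g] \<in> range_paths L v 0 1"
    by (simp add: range_paths_def nf_path_def edges1_def)
  then show "range_paths L v 0 1 \<noteq> {}" by blast
qed

lemma shift_space_labelled_tiles:
  fixes T :: "('a,'b,'c,'d) textile" and T' :: "('a','b \<times> nat,'c \<times> nat,'d') textile"
  assumes z: "z \<in> shift_space T'"
    and labels: "\<And>z. z \<in> edges (tF T') \<Longrightarrow> \<exists>f\<in>edges (tF T). \<exists>k. z = \<Phi> f k"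
    and rng: "\<And>f k. f \<in> edges (tF T) \<Longrightarrow> rng (tF T') (\<Phi> f k) = (rng (tF T) f, \<iota> f)"
    and src: "\<And>f k. f \<in> edges (tF T) \<Longrightarrow> src (tF T') (\<Phi> f k) = (src (tF T) f, k)"
    and p: "\<And>f k. f \<in> edges (tF T) \<Longrightarrow> fst (pE T' (\<Phi> f k)) = pE T f"
    and q: "\<And>f k. f \<in> edges (tF T) \<Longrightarrow> fst (qE T' (\<Phi> f k)) = qE T f"
  shows "z \<in> block_code (\<lambda>f f'. \<Phi> f (\<iota> f')) ` shift_space T"
proof -
  have "\<forall>n. \<exists>y. fst y \<in> edges (tF T) \<and> z n = \<Phi> (fst y) (snd y)"
    using labels shift_space_edges[OF z] by fastforce
  then obtain y where y: "\<forall>n. fst (y n) \<in> edges (tF T) \<and> z n = \<Phi> (fst (y n)) (snd (y n))"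
    by (rule choice[elim_format]) blast
  define x where "x = fst \<circ> y"
  define k where "k = snd \<circ> y"
  have x: "x n \<in> edges (tF T)" and z_eq: "z n = \<Phi> (x n) (k n)" for n
    using y[rule_format, of n] by (simp_all add: x_def k_def)
  have z_sq: "src (tF T') (z (i,j)) = rng (tF T') (z (Suc i, j))"
    "pE T' (z (i,j)) = qE T' (z (i, Suc j))" for i j
    using z unfolding shift_space_def by blast+
  have k_eq: "k (i,j) = \<iota> (x (Suc i, j))" and horizontal: "src (tF T) (x (i,j)) = rng (tF T) (x (Suc i, j))"
    and vertical: "pE T (x (i,j)) = qE T (x (i, Suc j))" for i j
    using z_sq[of i j] x p[of "x (i,j)" "k (i,j)"] q[of "x (i, Suc j)" "k (i, Suc j)"]
    by (simp_all add: z_eq rng src)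
  have "x \<in> shift_space T"
    unfolding shift_space_def using x horizontal vertical by blast
  moreover have "z = block_code (\<lambda>f f'. \<Phi> f (\<iota> f')) x"
    by (auto simp: block_code_def z_eq k_eq)
  ultimately show ?thesis by blast
qed

locale LR_textile_system =
  fixes T :: "('a,'b,'c,'d) textile"
  assumes textile_system: "textile_system T"
    and LR: "LR T"
begin

abbreviation "E \<equiv> tE T"
abbreviation "F \<equiv> tF T"
abbreviation "L \<equiv> twograph_of_textile T"

lemma rng_F_mem [simp]: "f \<in> edges F \<Longrightarrow> rng F f \<in> verts F"
  and src_F_mem [simp]: "f \<in> edges F \<Longrightarrow> src F f \<in> verts F"
  and rng_E_mem [simp]: "e \<in> edges E \<Longrightarrow> rng E e \<in> verts E"
  and src_E_mem [simp]: "e \<in> edges E \<Longrightarrow> src E e \<in> verts E"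
  using textile_system unfolding textile_system_def dgraph_wf_def by blast+

lemma pV_mem [simp]: "v \<in> verts F \<Longrightarrow> pV T v \<in> verts E"
  and qV_mem [simp]: "v \<in> verts F \<Longrightarrow> qV T v \<in> verts E"
  and pE_mem [simp]: "f \<in> edges F \<Longrightarrow> pE T f \<in> edges E"
  and qE_mem [simp]: "f \<in> edges F \<Longrightarrow> qE T f \<in> edges E"
  and rng_pE [simp]: "f \<in> edges F \<Longrightarrow> rng E (pE T f) = pV T (rng F f)"
  and src_pE [simp]: "f \<in> edges F \<Longrightarrow> src E (pE T f) = pV T (src F f)"
  and rng_qE [simp]: "f \<in> edges F \<Longrightarrow> rng E (qE T f) = qV T (rng F f)"
  and src_qE [simp]: "f \<in> edges F \<Longrightarrow> src E (qE T f) = qV T (src F f)"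
  using textile_system unfolding textile_system_def graph_hom_def by blast+

lemma tile_determined_by_boundary:
  "inj_on (\<lambda>f. (rng F f, pE T f, src F f, qE T f)) (edges F)"
  using textile_system unfolding textile_system_def by blast

lemma lift_at_range:
  "v \<in> verts F \<Longrightarrow> e \<in> edges E \<Longrightarrow> pV T v = rng E e \<Longrightarrow> \<exists>f\<in>edges F. rng F f = v \<and> pE T f = e"
  using LR unfolding LR_def by blast

lemma lift_at_source:
  "v \<in> verts F \<Longrightarrow> e \<in> edges E \<Longrightarrow> qV T v = src E e \<Longrightarrow> \<exists>f\<in>edges F. src F f = v \<and> qE T f = e"
  using LR unfolding LR_def by blast

lemma twograph_of_textile_simps [simp]:
  "V0 L = verts E" "C1 L = edges E" "C2 L = verts F"
  "r1 L = rng E" "s1 L = src E" "r2 L = qV T" "s2 L = pV T"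
  "Sq L = (\<lambda>f. (qE T f, src F f, rng F f, pE T f)) ` edges F"
  by (simp_all add: twograph_of_textile_def)

lemma edges1_L_iff [simp]:
  "Inl e \<in> edges1 L \<longleftrightarrow> e \<in> edges E" "Inr w \<in> edges1 L \<longleftrightarrow> w \<in> verts F"
  by (auto simp: edges1_def)

end

locale essential_LR_textile_system = LR_textile_system +
  assumes essential: "essential (twograph_of_textile T)"
begin

lemma exists_colour1_edge_into: "z \<in> verts E \<Longrightarrow> \<exists>e\<in>edges E. rng E e = z"
  using essential range_paths_colour1_nonempty[of L z] unfolding essential_def by simp

lemma exists_colour2_edge_into: "z \<in> verts E \<Longrightarrow> \<exists>w\<in>verts F. qV T w = z"
  using essential range_paths_colour2_nonempty[of L z] unfolding essential_def by simp

end

locale textile_tg_insplit = essential_LR_textile_system +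
  fixes m :: "'a \<Rightarrow> nat"
    and G :: "'a \<Rightarrow> nat \<Rightarrow> ('b + 'c) set"
  assumes tg_insplit_partition: "tg_insplit_partition (twograph_of_textile T) m G"
begin

abbreviation "idx \<equiv> tg_idx L m G"

lemma idx_Inl: "e \<in> edges E \<Longrightarrow> idx (Inl e) \<in> {1..m (rng E e)} \<and> Inl e \<in> G (rng E e) (idx (Inl e))"
  using tg_idx_mem[OF tg_insplit_partition, of "Inl e"] by simp

lemma idx_Inr: "w \<in> verts F \<Longrightarrow> idx (Inr w) \<in> {1..m (qV T w)} \<and> Inr w \<in> G (qV T w) (idx (Inr w))"
  using tg_idx_mem[OF tg_insplit_partition, of "Inr w"] by simp

lemma idx_Inl_eq: "e \<in> edges E \<Longrightarrow> k \<in> {1..m (rng E e)} \<Longrightarrow> Inl e \<in> G (rng E e) k \<Longrightarrow> idx (Inl e) = k"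
  using tg_idx_eq[OF tg_insplit_partition, of "Inl e"] by simp

lemma idx_Inr_eq: "w \<in> verts F \<Longrightarrow> k \<in> {1..m (qV T w)} \<Longrightarrow> Inr w \<in> G (qV T w) k \<Longrightarrow> idx (Inr w) = k"
  using tg_idx_eq[OF tg_insplit_partition, of "Inr w"] by simp

lemma idx_qE_eq_idx_rng: "f \<in> edges F \<Longrightarrow> idx (Inl (qE T f)) = idx (Inr (rng F f))"
  by (rule tg_idx_square[OF tg_insplit_partition, where b = "src F f" and f = "pE T f"]) auto

lemma class_contains_colour1_edge:
  assumes z: "z \<in> verts E" and k: "k \<in> {1..m z}"
  shows "\<exists>e\<in>edges E. rng E e = z \<and> Inl e \<in> G z k"
proof -
  have "G z k \<noteq> {}" "(\<Union>j\<in>{1..m z}. G z j) = {x \<in> edges1 L. er L x = z}"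
    using tg_insplit_partition z k unfolding tg_insplit_partition_def by auto
  then obtain x where x: "x \<in> G z k" "x \<in> edges1 L" "er L x = z"
    using k by blast
  show ?thesis
  proof (cases x)
    case (Inl e)
    with x show ?thesis by auto
  next
    case (Inr w)
    \<comment> \<open>pairing on any square with range edge w puts a colour-1 edge into the class of w\<close>
    then have w: "w \<in> verts F" "qV T w = z" using x by auto
    obtain e' where "e' \<in> edges E" "rng E e' = pV T w"
      using exists_colour1_edge_into[of "pV T w"] w by auto
    then obtain t where t: "t \<in> edges F" "rng F t = w"
      using lift_at_range w by metis
    have "idx (Inl (qE T t)) = k"
      using idx_qE_eq_idx_rng[OF t(1)] idx_Inr_eq[of w k] x Inr w k t(2) by simp
    then show ?thesis
      using idx_Inl[of "qE T t"] t w by (intro bexI[of _ "qE T t"]) auto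
  qed
qed

lemma m_pos: "z \<in> verts E \<Longrightarrow> 1 \<le> m z"
  using exists_colour1_edge_into idx_Inl by fastforce

definition split_index :: "'d \<Rightarrow> nat" where
  "split_index f = idx (Inl (pE T f))"

lemma split_index_mem: "f \<in> edges F \<Longrightarrow> split_index f \<in> {1..m (pV T (rng F f))}"
  using idx_Inl[of "pE T f"] by (simp add: split_index_def)

definition F_split_num :: "'c \<Rightarrow> nat" where
  "F_split_num v = m (pV T v)"

definition F_split_class :: "'c \<Rightarrow> nat \<Rightarrow> 'd set" where
  "F_split_class v k = {f \<in> edges F. rng F f = v \<and> Inl (pE T f) \<in> G (pV T v) k}"

lemma dg_insplit_partition_F_split: "dg_insplit_partition F F_split_num F_split_class"
  unfolding dg_insplit_partition_def
proof (intro ballI conjI impI)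
  fix v assume v: "v \<in> verts F"
  show "F_split_class v k \<noteq> {}" if "k \<in> {1..F_split_num v}" for k
  proof -
    have "k \<in> {1..m (pV T v)}"
      using that by (simp add: F_split_num_def)
    then obtain e where "e \<in> edges E" "rng E e = pV T v" "Inl e \<in> G (pV T v) k"
      using class_contains_colour1_edge[OF pV_mem[OF v]] by blast
    then obtain f where "f \<in> edges F" "rng F f = v" "pE T f = e"
      using lift_at_range v by metis
    then show ?thesis
      using \<open>Inl e \<in> G (pV T v) k\<close> by (auto simp: F_split_class_def)
  qed
  show "F_split_class v k \<inter> F_split_class v l = {}"
    if "k \<in> {1..F_split_num v}" "l \<in> {1..F_split_num v}" "k \<noteq> l" for k l
  proof -
    have "G (pV T v) k \<inter> G (pV T v) l = {}"
      using tg_insplit_partition v that unfolding tg_insplit_partition_def F_split_num_def by simp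
    then show ?thesis
      unfolding F_split_class_def by blast
  qed
  show "(\<Union>k\<in>{1..F_split_num v}. F_split_class v k) = {f \<in> edges F. rng F f = v}"
  proof
    show "(\<Union>k\<in>{1..F_split_num v}. F_split_class v k) \<subseteq> {f \<in> edges F. rng F f = v}"
      by (auto simp: F_split_class_def)
    show "{f \<in> edges F. rng F f = v} \<subseteq> (\<Union>k\<in>{1..F_split_num v}. F_split_class v k)"
    proof
      fix f assume "f \<in> {f \<in> edges F. rng F f = v}"
      then have "split_index f \<in> {1..F_split_num v}" "f \<in> F_split_class v (split_index f)"
        using idx_Inl[of "pE T f"] by (simp_all add: split_index_def F_split_num_def F_split_class_def)
      then show "f \<in> (\<Union>k\<in>{1..F_split_num v}. F_split_class v k)" by blast
    qed
  qed
qed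

lemma dg_idx_F_split: "f \<in> edges F \<Longrightarrow> dg_idx F_split_num F_split_class (rng F f) f = split_index f"
  using idx_Inl[of "pE T f"]
  by (intro dg_idx_eq[OF dg_insplit_partition_F_split])
    (auto simp: split_index_def F_split_num_def F_split_class_def)

definition split_tiles :: "('d \<times> nat) set" where
  "split_tiles = {(f,k). f \<in> edges F \<and> k \<in> {1..m (pV T (src F f))}}"

definition T_B :: "('a, 'c \<times> nat, 'b, 'd \<times> nat) textile" where
  "T_B = textile_invert (textile_insplit T F_split_num F_split_class)"

lemma T_B_simps [simp]:
  "verts (tF T_B) = edges E"
  "edges (tF T_B) = split_tiles"
  "rng (tF T_B) (f,k) = qE T f"
  "src (tF T_B) (f,k) = pE T f"
  "pE T_B (f,k) = (src F f, k)"
  "f \<in> edges F \<Longrightarrow> qE T_B (f,k) = (rng F f, split_index f)"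
  by (auto simp: T_B_def textile_invert_simps textile_insplit_simps dg_insplit_simps
      F_split_num_def split_tiles_def dg_idx_F_split)

definition T_B_class :: "'b \<Rightarrow> nat \<Rightarrow> ('d \<times> nat) set" where
  "T_B_class e k = {x \<in> edges (tF T_B). rng (tF T_B) x = e}"

lemma dg_insplit_partition_T_B: "dg_insplit_partition (tF T_B) (\<lambda>_. 1) T_B_class"
  unfolding T_B_class_def
proof (rule dg_insplit_partition_trivial)
  fix e assume "e \<in> verts (tF T_B)"
  then have e: "e \<in> edges E"
    by simp
  then obtain w where w: "w \<in> verts F" "qV T w = src E e"
    using exists_colour2_edge_into[of "src E e"] by auto
  then obtain f where "f \<in> edges F" "src F f = w" "qE T f = e"
    using lift_at_source e by metis
  moreover have "1 \<le> m (pV T w)"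
    using m_pos w by simp
  ultimately show "\<exists>x\<in>edges (tF T_B). rng (tF T_B) x = e"
    by (intro bexI[of _ "(f,1)"]) (auto simp: split_tiles_def)
qed

text \<open>The second insplitting may be trivial: the first one already records in each tile all
  the index data of a square of the insplit 2-graph.\<close>

definition T_D :: "('a, 'b \<times> nat, 'c \<times> nat, ('d \<times> nat) \<times> nat) textile" where
  "T_D = textile_invert (textile_insplit T_B (\<lambda>_. 1) T_B_class)"

lemma T_D_simps [simp]:
  "edges (tF T_D) = (\<lambda>fk. (fk, 1)) ` split_tiles"
  "f \<in> edges F \<Longrightarrow> rng (tF T_D) ((f,k),j) = (rng F f, split_index f)"
  "src (tF T_D) ((f,k),j) = (src F f, k)"
  "pE T_D ((f,k),j) = (pE T f, j)"
  "fst (qE T_D ((f,k),j)) = qE T f"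
  "(f,k) \<in> split_tiles \<Longrightarrow> qE T_D ((f,k),j) = (qE T f, 1)"
proof -
  note simps = T_D_def textile_invert_simps textile_insplit_simps dg_insplit_simps
  show "edges (tF T_D) = (\<lambda>fk. (fk, 1)) ` split_tiles"
    by (auto simp: simps)
  show "f \<in> edges F \<Longrightarrow> rng (tF T_D) ((f,k),j) = (rng F f, split_index f)"
    "src (tF T_D) ((f,k),j) = (src F f, k)" "pE T_D ((f,k),j) = (pE T f, j)"
    "fst (qE T_D ((f,k),j)) = qE T f"
    by (simp_all add: simps)
  assume "(f,k) \<in> split_tiles"
  then have "dg_idx (\<lambda>_. 1) T_B_class (qE T f) (f,k) = 1"
    by (intro dg_idx_eq[OF dg_insplit_partition_T_B]) (auto simp: T_B_class_def split_tiles_def)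
  then show "qE T_D ((f,k),j) = (qE T f, 1)"
    by (simp add: simps)
qed

lemma shift_space_T_D: "block_code (\<lambda>f f'. ((f, split_index f'), 1 :: nat)) ` shift_space T = shift_space T_D"
proof (intro equalityI subsetI)
  fix z assume "z \<in> block_code (\<lambda>f f'. ((f, split_index f'), 1 :: nat)) ` shift_space T"
  then obtain x where x: "x \<in> shift_space T" and z: "z = block_code (\<lambda>f f'. ((f, split_index f'), 1)) x"
    by blast
  have tiles: "x (i,j) \<in> edges F"
    and horizontal: "src F (x (i,j)) = rng F (x (Suc i, j))"
    and vertical: "pE T (x (i,j)) = qE T (x (i, Suc j))" for i j
    using x unfolding shift_space_def by blast+
  have index: "(x (i,j), split_index (x (Suc i, j))) \<in> split_tiles" for i j
    using split_index_mem[OF tiles] horizontal tiles by (simp add: split_tiles_def)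
  show "z \<in> shift_space T_D"
    unfolding shift_space_def
    using tiles horizontal vertical index by (simp add: z block_code_def)
next
  fix z assume "z \<in> shift_space T_D"
  then show "z \<in> block_code (\<lambda>f f'. ((f, split_index f'), 1 :: nat)) ` shift_space T"
    by (rule shift_space_labelled_tiles) (auto simp: split_tiles_def)
qed

abbreviation "T_I \<equiv> textile_of_twograph (tg_insplit L m G)"

text \<open>The square of the insplit 2-graph over the tile f whose source has split index k; the
  indices of its two range edges are forced by the partition.\<close>

definition split_square :: "'d \<Rightarrow> nat \<Rightarrow> ('b \<times> nat) \<times> ('c \<times> nat) \<times> ('c \<times> nat) \<times> ('b \<times> nat)" where
  "split_square f k = ((qE T f, idx (Inr (src F f))), (src F f, k), (rng F f, split_index f), (pE T f, k))"

lemma split_square_inj: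
  assumes "f \<in> edges F" "f' \<in> edges F" "split_square f k = split_square f' k'"
  shows "f = f' \<and> k = k'"
  using assms tile_determined_by_boundary unfolding split_square_def inj_on_def by auto

lemma T_I_split_square_simps [simp]:
  "rng (tF T_I) (split_square f k) = (rng F f, split_index f)"
  "src (tF T_I) (split_square f k) = (src F f, k)"
  "pE T_I (split_square f k) = (pE T f, k)"
  "qE T_I (split_square f k) = (qE T f, idx (Inr (src F f)))"
  by (simp_all add: textile_of_twograph_def split_square_def)

lemma edges_T_I: "edges (tF T_I) = case_prod split_square ` split_tiles"
proof (intro equalityI subsetI)
  fix z assume "z \<in> edges (tF T_I)"
  then obtain a b g e i j k where z: "z = ((a,i),(b,k),(g,j),(e,k))"
    and sq: "(a,b,g,e) \<in> Sq L" and k: "k \<in> {1..m (pV T b)}"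
    and i: "i \<in> {1..m (src E a)}" "Inr b \<in> G (src E a) i"
    and j: "j \<in> {1..m (pV T g)}" "Inl e \<in> G (pV T g) j"
    by (auto simp: textile_of_twograph_def tg_insplit_def)
  from sq obtain f where f: "f \<in> edges F" "a = qE T f" "b = src F f" "g = rng F f" "e = pE T f"
    by auto
  have "idx (Inr b) = i" "split_index f = j"
    using idx_Inr_eq[of b i] idx_Inl_eq[of e j] i j f by (simp_all add: split_index_def)
  then have "z = split_square f k"
    using z f by (simp add: split_square_def)
  moreover have "(f,k) \<in> split_tiles"
    using f k by (simp add: split_tiles_def)
  ultimately show "z \<in> case_prod split_square ` split_tiles"
    by force
next
  fix z assume "z \<in> case_prod split_square ` split_tiles"
  then obtain f k where z: "z = split_square f k" and f: "f \<in> edges F"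
    and k: "k \<in> {1..m (pV T (src F f))}" by (auto simp: split_tiles_def)
  have "idx (Inr (src F f)) \<in> {1..m (qV T (src F f))}" "Inr (src F f) \<in> G (qV T (src F f)) (idx (Inr (src F f)))"
    using idx_Inr[of "src F f"] f by simp_all
  moreover have "split_index f \<in> {1..m (pV T (rng F f))}" "Inl (pE T f) \<in> G (pV T (rng F f)) (split_index f)"
    using idx_Inl[of "pE T f"] f by (simp_all add: split_index_def)
  ultimately show "z \<in> edges (tF T_I)"
    using z f k by (auto simp: textile_of_twograph_def tg_insplit_def split_square_def)
qed

lemma split_square_mem: "(f,k) \<in> split_tiles \<Longrightarrow> split_square f k \<in> edges (tF T_I)"
  unfolding edges_T_I by force

lemma shift_space_T_I: "block_code (\<lambda>f f'. split_square f (split_index f')) ` shift_space T = shift_space T_I"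
proof (intro equalityI subsetI)
  fix z assume "z \<in> block_code (\<lambda>f f'. split_square f (split_index f')) ` shift_space T"
  then obtain x where x: "x \<in> shift_space T" and z: "z = block_code (\<lambda>f f'. split_square f (split_index f')) x"
    by blast
  show "z \<in> shift_space T_I"
    unfolding shift_space_def
  proof (intro CollectI allI conjI)
    fix i j
    have tiles: "x (i,j) \<in> edges F" "x (Suc i, j) \<in> edges F" "x (Suc i, Suc j) \<in> edges F"
      and horizontal: "src F (x (i,j)) = rng F (x (Suc i, j))"
        "src F (x (i, Suc j)) = rng F (x (Suc i, Suc j))"
      and vertical: "pE T (x (i,j)) = qE T (x (i, Suc j))"
        "pE T (x (Suc i, j)) = qE T (x (Suc i, Suc j))"
      using x unfolding shift_space_def by blast+
    show "z (i,j) \<in> edges (tF T_I)"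
      using split_square_mem split_index_mem[OF tiles(2)] tiles(1) horizontal(1)
      by (simp add: z block_code_def split_tiles_def)
    show "src (tF T_I) (z (i,j)) = rng (tF T_I) (z (Suc i, j))"
      using horizontal(1) by (simp add: z block_code_def)
    \<comment> \<open>the pairing condition, applied to the tile at (Suc i, Suc j)\<close>
    have "split_index (x (Suc i, j)) = idx (Inr (src F (x (i, Suc j))))"
      using idx_qE_eq_idx_rng[OF tiles(3)] horizontal(2) vertical(2) by (simp add: split_index_def)
    then show "pE T_I (z (i,j)) = qE T_I (z (i, Suc j))"
      using vertical(1) by (simp add: z block_code_def)
  qed
next
  fix z assume "z \<in> shift_space T_I"
  then show "z \<in> block_code (\<lambda>f f'. split_square f (split_index f')) ` shift_space T"
    by (rule shift_space_labelled_tiles) (auto simp: edges_T_I split_tiles_def)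
qed

lemma relabel_T_D_T_I:
  defines "\<phi> \<equiv> \<lambda>((f,k),j). split_square f k"
  shows "bij_betw \<phi> (edges (tF T_D)) (edges (tF T_I))"
    and "(\<lambda>x. \<phi> \<circ> x) ` shift_space T_D = shift_space T_I"
proof -
  have on_tiles: "\<phi> \<circ> (\<lambda>fk. (fk, 1)) = case_prod split_square"
    by (auto simp: \<phi>_def)
  have "inj_on (case_prod split_square) split_tiles"
    using split_square_inj by (auto simp: inj_on_def split_tiles_def)
  then show "bij_betw \<phi> (edges (tF T_D)) (edges (tF T_I))"
    unfolding bij_betw_def T_D_simps(1) edges_T_I image_comp on_tiles
    by (metis inj_on_imageI on_tiles)
  have "(\<lambda>x. \<phi> \<circ> x) \<circ> block_code (\<lambda>f f'. ((f, split_index f'), 1 :: nat))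
      = block_code (\<lambda>f f'. split_square f (split_index f'))"
    by (auto simp: \<phi>_def block_code_def fun_eq_iff)
  then show "(\<lambda>x. \<phi> \<circ> x) ` shift_space T_D = shift_space T_I"
    unfolding shift_space_T_D[symmetric] shift_space_T_I[symmetric] image_comp by simp
qed

definition tile_of_square :: "('b \<times> nat) \<times> ('c \<times> nat) \<times> ('c \<times> nat) \<times> ('b \<times> nat) \<Rightarrow> 'd" where
  "tile_of_square z = (THE f. f \<in> edges F \<and> (\<exists>k. z = split_square f k))"

lemma tile_of_split_square: "f \<in> edges F \<Longrightarrow> tile_of_square (split_square f k) = f"
  unfolding tile_of_square_def using split_square_inj by blast

lemma conjugate_shifts_T_I: "conjugate_shifts T T_I"
proof (rule conjugate_shifts_block_code[OF shift_space_T_I])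
  fix x assume "x \<in> shift_space T"
  then show "block_code (\<lambda>z _. tile_of_square z) (block_code (\<lambda>f f'. split_square f (split_index f')) x) = x"
    using shift_space_edges tile_of_split_square by (fastforce simp: block_code_def)
qed

end

theorem theorem6p1:
  fixes T :: "('a,'b,'c,'d) textile"
    and m :: "'a \<Rightarrow> nat"
    and G :: "'a \<Rightarrow> nat \<Rightarrow> ('b + 'c) set"
  assumes "textile_system T"
    and "LR T"
    and "row_finite (twograph_of_textile T)"
    and "essential (twograph_of_textile T)"
    and "tg_insplit_partition (twograph_of_textile T) m G"
  shows "(\<exists>m1 P1 m2 P2.
            dg_insplit_partition (tF T) m1 P1 \<and>
            dg_insplit_partition (tF (textile_invert (textile_insplit T m1 P1))) m2 P2 \<and>
            (\<exists>\<phi>. bij_betw \<phi>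
                   (edges (tF (textile_invert (textile_insplit (textile_invert (textile_insplit T m1 P1)) m2 P2))))
                   (edges (tF (textile_of_twograph (tg_insplit (twograph_of_textile T) m G)))) \<and>
                 (\<lambda>x. \<phi> \<circ> x) ` shift_space (textile_invert (textile_insplit (textile_invert (textile_insplit T m1 P1)) m2 P2))
                   = shift_space (textile_of_twograph (tg_insplit (twograph_of_textile T) m G))))
         \<and> conjugate_shifts T (textile_of_twograph (tg_insplit (twograph_of_textile T) m G))"
proof -
  interpret textile_tg_insplit T m G
    using assms(1,2,4,5) by unfold_locales
  show ?thesis
    using dg_insplit_partition_F_split dg_insplit_partition_T_B relabel_T_D_T_I conjugate_shifts_T_I
    unfolding T_D_def T_B_def by blast
qed

end
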